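(* In the simply typed distributive $\lambda$-calculus, if $\Gamma\vdash t:A$ and $t\to_{\mathsf{dist}} s$, then $\Gamma\vdash s:A$.
   Context: Terms: $t,s,u ::= x \mid \lambda x.t \mid ts \mid \langle t,s\rangle \mid \pi_1 t \mid \pi_2 t$ (up to $\alpha$-renaming); $t\{x:=s\}$ is capture-avoiding substitution. Top-level rules: $(\lambda x.t)s \mapsto t\{x:=s\}$; $\pi_i\langle t_1,t_2\rangle \mapsto t_i$ ($i=1,2$); $\langle t,s\rangle u \mapsto \langle tu, su\rangle$; $\pi_i(\lambda x.t)\mapsto \lambda x.\pi_i t$ ($i=1,2$); $\to_{\mathsf{dist}}$ is the closure of these rules under all term constructors. Types: $A ::= \tau \mid A\Rightarrow A \mid A\wedge A$ with $\tau$ a single atomic type. The relation $\equiv$ on types is the smallest equivalence relation containing $A\Rightarrow (B\wedge C)\equiv (A\Rightarrow B)\wedge(A\Rightarrow C)$ for all $A,B,C$ and closed under congruence for $\Rightarrow$ and $\wedge$ in both arguments. Typing rules: $\Gamma,x:A\vdash x:A$; if $\Gamma\vdash t:A$ and $A\equiv B$ then $\Gamma\vdash t:B$; if $\Gamma,x:A\vdash t:B$ then $\Gamma\vdash \lambda x.t:A\Rightarrow B$; if $\Gamma\vdash t:A\Rightarrow B$ and $\Gamma\vdash s:A$ then $\Gamma\vdash ts:B$; if $\Gamma\vdash t:A$ and $\Gamma\vdash s:B$ then $\Gamma\vdash\langle t,s\rangle:A\wedge B$; if $\Gamma\vdash t:A\wedge B$ then $\Gamma\vdash\pi_1 t:A$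 and $\Gamma\vdash \pi_2 t:B$. *)

theory Defs
  imports Main
begin

datatype trm =
    Var nat
  | Lam trm
  | App trm trm
  | Pair trm trm
  | Proj1 trm
  | Proj2 trm

primrec lift :: "trm \<Rightarrow> nat \<Rightarrow> trm" where
  "lift (Var i) k = (if i < k then Var i else Var (Suc i))"
| "lift (Lam t) k = Lam (lift t (Suc k))"
| "lift (App t s) k = App (lift t k) (lift s k)"
| "lift (Pair t s) k = Pair (lift t k) (lift s k)"
| "lift (Proj1 t) k = Proj1 (lift t k)"
| "lift (Proj2 t) k = Proj2 (lift t k)"

text \<open>Capture-avoiding substitution: subst t s k replaces index k by s in t
  (decrementing free indices above k), as in the beta rule.\<close>
primrec subst :: "trm \<Rightarrow> trm \<Rightarrow> nat \<Rightarrow> trm" where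
  "subst (Var i) s k = (if k < i then Var (i - 1) else if i = k then s else Var i)"
| "subst (Lam t) s k = Lam (subst t (lift s 0) (Suc k))"
| "subst (App t u) s k = App (subst t s k) (subst u s k)"
| "subst (Pair t u) s k = Pair (subst t s k) (subst u s k)"
| "subst (Proj1 t) s k = Proj1 (subst t s k)"
| "subst (Proj2 t) s k = Proj2 (subst t s k)"

inductive dist :: "trm \<Rightarrow> trm \<Rightarrow> bool" (infixl "\<rightarrow>\<^sub>d" 50) where
  beta:  "App (Lam t) s \<rightarrow>\<^sub>d subst t s 0"
| pi1:   "Proj1 (Pair t1 t2) \<rightarrow>\<^sub>d t1"
| pi2:   "Proj2 (Pair t1 t2) \<rightarrow>\<^sub>d t2"
| appd:  "App (Pair t s) u \<rightarrow>\<^sub>d Pair (App t u) (App s u)"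
| pi1l:  "Proj1 (Lam t) \<rightarrow>\<^sub>d Lam (Proj1 t)"
| pi2l:  "Proj2 (Lam t) \<rightarrow>\<^sub>d Lam (Proj2 t)"
| lam:   "t \<rightarrow>\<^sub>d t' \<Longrightarrow> Lam t \<rightarrow>\<^sub>d Lam t'"
| appL:  "t \<rightarrow>\<^sub>d t' \<Longrightarrow> App t s \<rightarrow>\<^sub>d App t' s"
| appR:  "s \<rightarrow>\<^sub>d s' \<Longrightarrow> App t s \<rightarrow>\<^sub>d App t s'"
| pairL: "t \<rightarrow>\<^sub>d t' \<Longrightarrow> Pair t s \<rightarrow>\<^sub>d Pair t' s"
| pairR: "s \<rightarrow>\<^sub>d s' \<Longrightarrow> Pair t s \<rightarrow>\<^sub>d Pair t s'"
| proj1: "t \<rightarrow>\<^sub>d t' \<Longrightarrow> Proj1 t \<rightarrow>\<^sub>d Proj1 t'"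
| proj2: "t \<rightarrow>\<^sub>d t' \<Longrightarrow> Proj2 t \<rightarrow>\<^sub>d Proj2 t'"

datatype ty =
    Atom
  | Fun ty ty  (infixr "\<Rightarrow>\<^sub>t" 200)
  | Conj ty ty (infixr "\<and>\<^sub>t" 210)

inductive ty_equiv :: "ty \<Rightarrow> ty \<Rightarrow> bool" (infix "\<equiv>\<^sub>t" 50) where
  dist_ax: "A \<Rightarrow>\<^sub>t (B \<and>\<^sub>t C) \<equiv>\<^sub>t (A \<Rightarrow>\<^sub>t B) \<and>\<^sub>t (A \<Rightarrow>\<^sub>t C)"
| refl:    "A \<equiv>\<^sub>t A"
| sym:     "A \<equiv>\<^sub>t B \<Longrightarrow> B \<equiv>\<^sub>t A"
| trans:   "A \<equiv>\<^sub>t B \<Longrightarrow> B \<equiv>\<^sub>t C \<Longrightarrow> A \<equiv>\<^sub>t C"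
| cong_fun:  "A \<equiv>\<^sub>t A' \<Longrightarrow> B \<equiv>\<^sub>t B' \<Longrightarrow> A \<Rightarrow>\<^sub>t B \<equiv>\<^sub>t A' \<Rightarrow>\<^sub>t B'"
| cong_conj: "A \<equiv>\<^sub>t A' \<Longrightarrow> B \<equiv>\<^sub>t B' \<Longrightarrow> A \<and>\<^sub>t B \<equiv>\<^sub>t A' \<and>\<^sub>t B'"

definition shift :: "(nat \<Rightarrow> ty) \<Rightarrow> ty \<Rightarrow> (nat \<Rightarrow> ty)" where
  "shift \<Gamma> A = (\<lambda>i. case i of 0 \<Rightarrow> A | Suc j \<Rightarrow> \<Gamma> j)"

inductive typing :: "(nat \<Rightarrow> ty) \<Rightarrow> trm \<Rightarrow> ty \<Rightarrow> bool" ("_ \<turnstile> _ : _" [50, 50, 50] 50) where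
  var:   "\<Gamma> i = A \<Longrightarrow> \<Gamma> \<turnstile> Var i : A"
| equiv: "\<Gamma> \<turnstile> t : A \<Longrightarrow> A \<equiv>\<^sub>t B \<Longrightarrow> \<Gamma> \<turnstile> t : B"
| abs:   "shift \<Gamma> A \<turnstile> t : B \<Longrightarrow> \<Gamma> \<turnstile> Lam t : A \<Rightarrow>\<^sub>t B"
| app:   "\<Gamma> \<turnstile> t : A \<Rightarrow>\<^sub>t B \<Longrightarrow> \<Gamma> \<turnstile> s : A \<Longrightarrow> \<Gamma> \<turnstile> App t s : B"
| pair:  "\<Gamma> \<turnstile> t : A \<Longrightarrow> \<Gamma> \<turnstile> s : B \<Longrightarrow> \<Gamma> \<turnstile> Pair t s : A \<and>\<^sub>t B"
| proj1: "\<Gamma> \<turnstile> t : A \<and>\<^sub>t B \<Longrightarrow> \<Gamma> \<turnstile> Proj1 t : A"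
| proj2: "\<Gamma> \<turnstile> t : A \<and>\<^sub>t B \<Longrightarrow> \<Gamma> \<turnstile> Proj2 t : B"

end

theory Submission
  imports Defs
begin

text \<open>Type equivalence is decided by a normal form that pushes every arrow
  through the conjunctions of its codomain. Hence \<open>\<equiv>\<^sub>t\<close> is injective on
  arrows and on conjunctions, and an arrow is equivalent to a conjunction only
  if its codomain is. With generation lemmas that hold up to \<open>\<equiv>\<^sub>t\<close>, this is
  exactly what each redex needs; the beta case is the usual substitution
  lemma.\<close>

lemmas [trans] = ty_equiv.trans

fun distrib_fun :: "ty \<Rightarrow> ty \<Rightarrow> ty" where
  "distrib_fun A (B1 \<and>\<^sub>t B2) = distrib_fun A B1 \<and>\<^sub>t distrib_fun A B2"
| "distrib_fun A B = A \<Rightarrow>\<^sub>t B"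

fun ty_nf :: "ty \<Rightarrow> ty" where
  "ty_nf Atom = Atom"
| "ty_nf (A \<and>\<^sub>t B) = ty_nf A \<and>\<^sub>t ty_nf B"
| "ty_nf (A \<Rightarrow>\<^sub>t B) = distrib_fun (ty_nf A) (ty_nf B)"

lemma Fun_equiv_distrib_fun: "A \<Rightarrow>\<^sub>t B \<equiv>\<^sub>t distrib_fun A B"
proof (induction B)
  case (Conj B1 B2)
  have "A \<Rightarrow>\<^sub>t B1 \<and>\<^sub>t B2 \<equiv>\<^sub>t (A \<Rightarrow>\<^sub>t B1) \<and>\<^sub>t (A \<Rightarrow>\<^sub>t B2)" by (rule dist_ax)
  also have "\<dots> \<equiv>\<^sub>t distrib_fun A B1 \<and>\<^sub>t distrib_fun A B2" using Conj by (rule cong_conj)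
  finally show ?case by simp
qed (auto intro: ty_equiv.refl)

lemma ty_equiv_ty_nf: "A \<equiv>\<^sub>t ty_nf A"
proof (induction A)
  case (Fun A B)
  have "A \<Rightarrow>\<^sub>t B \<equiv>\<^sub>t ty_nf A \<Rightarrow>\<^sub>t ty_nf B" using Fun by (rule cong_fun)
  also have "\<dots> \<equiv>\<^sub>t distrib_fun (ty_nf A) (ty_nf B)" by (rule Fun_equiv_distrib_fun)
  finally show ?case by simp
qed (auto intro: ty_equiv.refl cong_conj)

lemma ty_equiv_iff_ty_nf_eq: "A \<equiv>\<^sub>t B \<longleftrightarrow> ty_nf A = ty_nf B"
proof
  show "A \<equiv>\<^sub>t B \<Longrightarrow> ty_nf A = ty_nf B"
    by (induction rule: ty_equiv.induct) auto
  show "ty_nf A = ty_nf B \<Longrightarrow> A \<equiv>\<^sub>t B"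
    by (metis ty_equiv_ty_nf ty_equiv.sym ty_equiv.trans)
qed

lemma distrib_fun_inject: "distrib_fun A B = distrib_fun A' B' \<Longrightarrow> A = A' \<and> B = B'"
proof (induction B arbitrary: B')
  case (Conj B1 B2) then show ?case by (cases B') auto
next
  case Atom then show ?case by (cases B') auto
next
  case (Fun X Y) then show ?case by (cases B') auto
qed

lemma Fun_equiv_FunD: "A \<Rightarrow>\<^sub>t B \<equiv>\<^sub>t A' \<Rightarrow>\<^sub>t B' \<Longrightarrow> A \<equiv>\<^sub>t A' \<and> B \<equiv>\<^sub>t B'"
  by (auto simp: ty_equiv_iff_ty_nf_eq dest: distrib_fun_inject)

lemma Conj_equiv_ConjD: "A \<and>\<^sub>t B \<equiv>\<^sub>t A' \<and>\<^sub>t B' \<Longrightarrow> A \<equiv>\<^sub>t A' \<and> B \<equiv>\<^sub>t B'"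
  by (auto simp: ty_equiv_iff_ty_nf_eq)

lemma Fun_equiv_ConjE:
  assumes "A \<Rightarrow>\<^sub>t B \<equiv>\<^sub>t C1 \<and>\<^sub>t C2"
  obtains B1 B2 where "B \<equiv>\<^sub>t B1 \<and>\<^sub>t B2" "A \<Rightarrow>\<^sub>t B1 \<equiv>\<^sub>t C1" "A \<Rightarrow>\<^sub>t B2 \<equiv>\<^sub>t C2"
proof -
  have "distrib_fun (ty_nf A) (ty_nf B) = ty_nf C1 \<and>\<^sub>t ty_nf C2"
    using assms by (simp add: ty_equiv_iff_ty_nf_eq)
  then obtain B1 B2 where B: "ty_nf B = B1 \<and>\<^sub>t B2"
    and C: "distrib_fun (ty_nf A) B1 = ty_nf C1" "distrib_fun (ty_nf A) B2 = ty_nf C2"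
    by (cases "ty_nf B") auto
  have Fun_equiv_nf: "A \<Rightarrow>\<^sub>t B' \<equiv>\<^sub>t C" if "distrib_fun (ty_nf A) B' = ty_nf C" for B' C
  proof -
    have "A \<Rightarrow>\<^sub>t B' \<equiv>\<^sub>t ty_nf A \<Rightarrow>\<^sub>t B'" by (intro cong_fun ty_equiv_ty_nf ty_equiv.refl)
    also have "\<dots> \<equiv>\<^sub>t distrib_fun (ty_nf A) B'" by (rule Fun_equiv_distrib_fun)
    also have "\<dots> \<equiv>\<^sub>t C" unfolding that by (rule ty_equiv.sym[OF ty_equiv_ty_nf])
    finally show ?thesis .
  qed
  from ty_equiv_ty_nf[of B] have "B \<equiv>\<^sub>t B1 \<and>\<^sub>t B2" by (simp add: B)
  then show ?thesis using Fun_equiv_nf[OF C(1)] Fun_equiv_nf[OF C(2)] by (rule that)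
qed

lemma Lam_typingE:
  assumes "\<Gamma> \<turnstile> Lam t : D"
  obtains A B where "shift \<Gamma> A \<turnstile> t : B" "A \<Rightarrow>\<^sub>t B \<equiv>\<^sub>t D"
  using assms
proof (induction \<Gamma> "Lam t" D arbitrary: thesis rule: typing.induct)
  case equiv then show ?case by (blast intro: ty_equiv.trans)
next
  case abs then show ?case by (blast intro: ty_equiv.refl)
qed

lemma App_typingE:
  assumes "\<Gamma> \<turnstile> App t s : D"
  obtains A B where "\<Gamma> \<turnstile> t : A \<Rightarrow>\<^sub>t B" "\<Gamma> \<turnstile> s : A" "B \<equiv>\<^sub>t D"
  using assms
proof (induction \<Gamma> "App t s" D arbitrary: thesis rule: typing.induct)
  case equiv then show ?case by (blast intro: ty_equiv.trans)
next
  case app then show ?case by (blast intro: ty_equiv.refl)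
qed

lemma Pair_typingE:
  assumes "\<Gamma> \<turnstile> Pair t s : D"
  obtains A B where "\<Gamma> \<turnstile> t : A" "\<Gamma> \<turnstile> s : B" "A \<and>\<^sub>t B \<equiv>\<^sub>t D"
  using assms
proof (induction \<Gamma> "Pair t s" D arbitrary: thesis rule: typing.induct)
  case equiv then show ?case by (blast intro: ty_equiv.trans)
next
  case pair then show ?case by (blast intro: ty_equiv.refl)
qed

lemma Proj1_typingE:
  assumes "\<Gamma> \<turnstile> Proj1 t : D"
  obtains A B where "\<Gamma> \<turnstile> t : A \<and>\<^sub>t B" "A \<equiv>\<^sub>t D"
  using assms
proof (induction \<Gamma> "Proj1 t" D arbitrary: thesis rule: typing.induct)
  case equiv then show ?case by (blast intro: ty_equiv.trans)
next
  case proj1 then show ?case by (blast intro: ty_equiv.refl)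
qed

lemma Proj2_typingE:
  assumes "\<Gamma> \<turnstile> Proj2 t : D"
  obtains A B where "\<Gamma> \<turnstile> t : A \<and>\<^sub>t B" "B \<equiv>\<^sub>t D"
  using assms
proof (induction \<Gamma> "Proj2 t" D arbitrary: thesis rule: typing.induct)
  case equiv then show ?case by (blast intro: ty_equiv.trans)
next
  case proj2 then show ?case by (blast intro: ty_equiv.refl)
qed

definition ctx_insert :: "(nat \<Rightarrow> ty) \<Rightarrow> nat \<Rightarrow> ty \<Rightarrow> nat \<Rightarrow> ty" where
  "ctx_insert \<Gamma> k A = (\<lambda>i. if i < k then \<Gamma> i else if i = k then A else \<Gamma> (i - 1))"

lemma shift_eq_ctx_insert_0: "shift \<Gamma> A = ctx_insert \<Gamma> 0 A"
  by (auto simp: shift_def ctx_insert_def split: nat.split)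

lemma shift_ctx_insert: "shift (ctx_insert \<Gamma> k A) C = ctx_insert (shift \<Gamma> C) (Suc k) A"
  by (auto simp: shift_def ctx_insert_def split: nat.split)

lemma typing_lift: "\<Gamma> \<turnstile> t : B \<Longrightarrow> ctx_insert \<Gamma> k A \<turnstile> lift t k : B"
proof (induction arbitrary: k rule: typing.induct)
  case (var \<Gamma> i A)
  then show ?case by (auto simp: ctx_insert_def intro!: typing.var)
next
  case (abs \<Gamma> A t B)
  then show ?case by (auto simp: shift_ctx_insert intro!: typing.abs)
next
  case (equiv \<Gamma> t A B) then show ?case by (metis typing.equiv)
next
  case (app \<Gamma> t A B s) then show ?case by (simp, metis typing.app)
next
  case (pair \<Gamma> t A s B) then show ?case by (simp, metis typing.pair)
next
  case (proj1 \<Gamma> t A B) then show ?case by (simp, metis typing.proj1)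
next
  case (proj2 \<Gamma> t A B) then show ?case by (simp, metis typing.proj2)
qed

lemma typing_subst:
  assumes "ctx_insert \<Gamma> k A \<turnstile> t : B" and "\<Gamma> \<turnstile> s : A"
  shows "\<Gamma> \<turnstile> subst t s k : B"
  using assms
proof (induction "ctx_insert \<Gamma> k A" t B arbitrary: \<Gamma> k s rule: typing.induct)
  case (var i B)
  then show ?case by (auto simp: ctx_insert_def intro!: typing.var)
next
  case (abs C t B)
  have "shift \<Gamma> C \<turnstile> lift s 0 : A"
    using typing_lift[OF abs.prems] by (simp add: shift_eq_ctx_insert_0)
  then show ?case using abs by (auto simp: shift_ctx_insert intro!: typing.abs)
next
  case (equiv t A B) then show ?case by (metis typing.equiv)
next
  case (app t A B s) then show ?case by (simp, metis typing.app)
next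
  case (pair t A s B) then show ?case by (simp, metis typing.pair)
next
  case (proj1 t A B) then show ?case by (simp, metis typing.proj1)
next
  case (proj2 t A B) then show ?case by (simp, metis typing.proj2)
qed

lemma typing_App_Lam:
  assumes "\<Gamma> \<turnstile> App (Lam t) s : D"
  shows "\<Gamma> \<turnstile> subst t s 0 : D"
proof -
  obtain A B where Lam: "\<Gamma> \<turnstile> Lam t : A \<Rightarrow>\<^sub>t B" and s: "\<Gamma> \<turnstile> s : A" and "B \<equiv>\<^sub>t D"
    using assms by (rule App_typingE)
  obtain A' B' where t: "shift \<Gamma> A' \<turnstile> t : B'" and "A' \<Rightarrow>\<^sub>t B' \<equiv>\<^sub>t A \<Rightarrow>\<^sub>t B"
    using Lam by (rule Lam_typingE)
  then have A: "A \<equiv>\<^sub>t A'" and B: "B' \<equiv>\<^sub>t B"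
    by (auto dest: Fun_equiv_FunD intro: ty_equiv.sym)
  from s A have "\<Gamma> \<turnstile> s : A'" by (rule typing.equiv)
  with t have "\<Gamma> \<turnstile> subst t s 0 : B'"
    by (simp add: shift_eq_ctx_insert_0 typing_subst)
  moreover from B \<open>B \<equiv>\<^sub>t D\<close> have "B' \<equiv>\<^sub>t D" by (rule ty_equiv.trans)
  ultimately show ?thesis by (rule typing.equiv)
qed

lemma typing_Proj1_Pair:
  assumes "\<Gamma> \<turnstile> Proj1 (Pair t1 t2) : D"
  shows "\<Gamma> \<turnstile> t1 : D"
proof -
  obtain A B where P: "\<Gamma> \<turnstile> Pair t1 t2 : A \<and>\<^sub>t B" and "A \<equiv>\<^sub>t D"
    using assms by (rule Proj1_typingE)
  obtain A' B' where "\<Gamma> \<turnstile> t1 : A'" "A' \<and>\<^sub>t B' \<equiv>\<^sub>t A \<and>\<^sub>t B"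
    using P by (rule Pair_typingE)
  then have "\<Gamma> \<turnstile> t1 : A" by (meson Conj_equiv_ConjD typing.equiv)
  then show ?thesis using \<open>A \<equiv>\<^sub>t D\<close> by (rule typing.equiv)
qed

lemma typing_Proj2_Pair:
  assumes "\<Gamma> \<turnstile> Proj2 (Pair t1 t2) : D"
  shows "\<Gamma> \<turnstile> t2 : D"
proof -
  obtain A B where P: "\<Gamma> \<turnstile> Pair t1 t2 : A \<and>\<^sub>t B" and "B \<equiv>\<^sub>t D"
    using assms by (rule Proj2_typingE)
  obtain A' B' where "\<Gamma> \<turnstile> t2 : B'" "A' \<and>\<^sub>t B' \<equiv>\<^sub>t A \<and>\<^sub>t B"
    using P by (rule Pair_typingE)
  then have "\<Gamma> \<turnstile> t2 : B" by (meson Conj_equiv_ConjD typing.equiv)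
  then show ?thesis using \<open>B \<equiv>\<^sub>t D\<close> by (rule typing.equiv)
qed

lemma typing_App_Pair:
  assumes "\<Gamma> \<turnstile> App (Pair t s) u : D"
  shows "\<Gamma> \<turnstile> Pair (App t u) (App s u) : D"
proof -
  obtain A B where P: "\<Gamma> \<turnstile> Pair t s : A \<Rightarrow>\<^sub>t B" and u: "\<Gamma> \<turnstile> u : A" and "B \<equiv>\<^sub>t D"
    using assms by (rule App_typingE)
  obtain C1 C2 where t: "\<Gamma> \<turnstile> t : C1" and s: "\<Gamma> \<turnstile> s : C2" and "C1 \<and>\<^sub>t C2 \<equiv>\<^sub>t A \<Rightarrow>\<^sub>t B"
    using P by (rule Pair_typingE)
  then obtain B1 B2 where B: "B \<equiv>\<^sub>t B1 \<and>\<^sub>t B2" and "A \<Rightarrow>\<^sub>t B1 \<equiv>\<^sub>t C1" "A \<Rightarrow>\<^sub>t B2 \<equiv>\<^sub>t C2"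
    by (meson Fun_equiv_ConjE ty_equiv.sym)
  with t s u have "\<Gamma> \<turnstile> App t u : B1" "\<Gamma> \<turnstile> App s u : B2"
    by (meson typing.app typing.equiv ty_equiv.sym)+
  then have "\<Gamma> \<turnstile> Pair (App t u) (App s u) : B1 \<and>\<^sub>t B2" by (rule typing.pair)
  then show ?thesis using B \<open>B \<equiv>\<^sub>t D\<close> by (meson typing.equiv ty_equiv.trans ty_equiv.sym)
qed

lemma typing_Proj1_Lam:
  assumes "\<Gamma> \<turnstile> Proj1 (Lam t) : D"
  shows "\<Gamma> \<turnstile> Lam (Proj1 t) : D"
proof -
  obtain C1 C2 where L: "\<Gamma> \<turnstile> Lam t : C1 \<and>\<^sub>t C2" and "C1 \<equiv>\<^sub>t D"
    using assms by (rule Proj1_typingE)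
  obtain A B where t: "shift \<Gamma> A \<turnstile> t : B" and "A \<Rightarrow>\<^sub>t B \<equiv>\<^sub>t C1 \<and>\<^sub>t C2"
    using L by (rule Lam_typingE)
  from this(2) obtain B1 B2 where "B \<equiv>\<^sub>t B1 \<and>\<^sub>t B2" "A \<Rightarrow>\<^sub>t B1 \<equiv>\<^sub>t C1" "A \<Rightarrow>\<^sub>t B2 \<equiv>\<^sub>t C2"
    by (rule Fun_equiv_ConjE)
  with t have "\<Gamma> \<turnstile> Lam (Proj1 t) : A \<Rightarrow>\<^sub>t B1"
    by (meson typing.abs typing.equiv typing.proj1)
  then show ?thesis using \<open>A \<Rightarrow>\<^sub>t B1 \<equiv>\<^sub>t C1\<close> \<open>C1 \<equiv>\<^sub>t D\<close> by (meson typing.equiv ty_equiv.trans)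
qed

lemma typing_Proj2_Lam:
  assumes "\<Gamma> \<turnstile> Proj2 (Lam t) : D"
  shows "\<Gamma> \<turnstile> Lam (Proj2 t) : D"
proof -
  obtain C1 C2 where L: "\<Gamma> \<turnstile> Lam t : C1 \<and>\<^sub>t C2" and "C2 \<equiv>\<^sub>t D"
    using assms by (rule Proj2_typingE)
  obtain A B where t: "shift \<Gamma> A \<turnstile> t : B" and "A \<Rightarrow>\<^sub>t B \<equiv>\<^sub>t C1 \<and>\<^sub>t C2"
    using L by (rule Lam_typingE)
  from this(2) obtain B1 B2 where "B \<equiv>\<^sub>t B1 \<and>\<^sub>t B2" "A \<Rightarrow>\<^sub>t B1 \<equiv>\<^sub>t C1" "A \<Rightarrow>\<^sub>t B2 \<equiv>\<^sub>t C2"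
    by (rule Fun_equiv_ConjE)
  with t have "\<Gamma> \<turnstile> Lam (Proj2 t) : A \<Rightarrow>\<^sub>t B2"
    by (meson typing.abs typing.equiv typing.proj2)
  then show ?thesis using \<open>A \<Rightarrow>\<^sub>t B2 \<equiv>\<^sub>t C2\<close> \<open>C2 \<equiv>\<^sub>t D\<close> by (meson typing.equiv ty_equiv.trans)
qed

theorem theorem3:
  assumes "\<Gamma> \<turnstile> t : A" and "t \<rightarrow>\<^sub>d s"
  shows "\<Gamma> \<turnstile> s : A"
  using assms(2,1)
proof (induction arbitrary: \<Gamma> A rule: dist.induct)
  case beta then show ?case by (rule typing_App_Lam)
next
  case pi1 then show ?case by (rule typing_Proj1_Pair)
next
  case pi2 then show ?case by (rule typing_Proj2_Pair)
next
  case appd then show ?case by (rule typing_App_Pair)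
next
  case pi1l then show ?case by (rule typing_Proj1_Lam)
next
  case pi2l then show ?case by (rule typing_Proj2_Lam)
next
  case lam then show ?case by (meson Lam_typingE typing.abs typing.equiv)
next
  case appL then show ?case by (meson App_typingE typing.app typing.equiv)
next
  case appR then show ?case by (meson App_typingE typing.app typing.equiv)
next
  case pairL then show ?case by (meson Pair_typingE typing.pair typing.equiv)
next
  case pairR then show ?case by (meson Pair_typingE typing.pair typing.equiv)
next
  case proj1 then show ?case by (meson Proj1_typingE typing.proj1 typing.equiv)
next
  case proj2 then show ?case by (meson Proj2_typingE typing.proj2 typing.equiv)
qed

end
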